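(* As $t\to\infty$, $\mathrm{Prob}\big([Z^{(1)}_t-\alpha,Z^{(1)}_t+\alpha]\cap\mathbb N\subseteq D\big)\to1$.
   Context: Fix $\alpha\ge 2$. Let $(\xi_0(z))_{z\in\mathbb Z}$ be i.i.d. Pareto with $\mathrm{Prob}(\xi_0(z)>x)=x^{-\alpha}$, $x\ge1$. Let $p:\mathbb N\to[0,1]$ be eventually nondecreasing with $p(n)\to1$, $q=1-p$. Define $\xi(n)=\xi_0(n)$ for $n\ge0$ and, independently for each $n\ge1$, $\xi(-n)=\xi_0(n)$ with probability $p(n)$, $\xi(-n)=\xi_0(-n)$ with probability $q(n)$. Let $D=\{z\in\mathbb N_0:\xi(z)=\xi(-z)\}$, $\Psi_t(z)=\xi(z)-\frac{|z|}{t}\log\xi(z)$, and $Z^{(1)}_t$ a maximiser of $\Psi_t$ over $D$. *)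

theory Defs
  imports "HOL-Probability.Probability"
begin

definition xi :: "(int \<Rightarrow> 'a \<Rightarrow> real) \<Rightarrow> (nat \<Rightarrow> 'a \<Rightarrow> bool) \<Rightarrow> int \<Rightarrow> 'a \<Rightarrow> real" where
  "xi xi0 coin z \<omega> =
     (if z \<ge> 0 then xi0 z \<omega>
      else if coin (nat (- z)) \<omega> then xi0 (- z) \<omega> else xi0 z \<omega>)"

definition Dset :: "(int \<Rightarrow> 'a \<Rightarrow> real) \<Rightarrow> (nat \<Rightarrow> 'a \<Rightarrow> bool) \<Rightarrow> 'a \<Rightarrow> nat set" where
  "Dset xi0 coin \<omega> = {z. xi xi0 coin (int z) \<omega> = xi xi0 coin (- int z) \<omega>}"

definition Psi :: "(int \<Rightarrow> 'a \<Rightarrow> real) \<Rightarrow> (nat \<Rightarrow> 'a \<Rightarrow> bool) \<Rightarrow> real \<Rightarrow> nat \<Rightarrow> 'a \<Rightarrow> real" where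
  "Psi xi0 coin t z \<omega> = xi xi0 coin (int z) \<omega> - real z / t * ln (xi xi0 coin (int z) \<omega>)"

definition is_max_D :: "(int \<Rightarrow> 'a \<Rightarrow> real) \<Rightarrow> (nat \<Rightarrow> 'a \<Rightarrow> bool) \<Rightarrow> real \<Rightarrow> 'a \<Rightarrow> nat \<Rightarrow> bool" where
  "is_max_D xi0 coin t \<omega> z \<longleftrightarrow> z \<in> Dset xi0 coin \<omega> \<and>
     (\<forall>y \<in> Dset xi0 coin \<omega>. Psi xi0 coin t y \<omega> \<le> Psi xi0 coin t z \<omega>)"

definition good_event :: "(int \<Rightarrow> 'a \<Rightarrow> real) \<Rightarrow> (nat \<Rightarrow> 'a \<Rightarrow> bool) \<Rightarrow> real \<Rightarrow> real \<Rightarrow> 'a \<Rightarrow> bool" where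
  "good_event xi0 coin \<alpha> t \<omega> \<longleftrightarrow>
     (\<exists>z. is_max_D xi0 coin t \<omega> z) \<and>
     (\<forall>z. is_max_D xi0 coin t \<omega> z \<longrightarrow>
        (\<forall>y::nat. 1 \<le> y \<and> real z - \<alpha> \<le> real y \<and> real y \<le> real z + \<alpha> \<longrightarrow> y \<in> Dset xi0 coin \<omega>))"

end

theory Submission
  imports Defs
begin

text \<open>
  A site y \<notin> D lying within \<alpha> of a maximiser Z forces the event near_max_off at y: the maximiser
  of \<Psi> over D - {y} lies within \<alpha> of y. This event does not involve the coin at y, so
  together with the coin at y showing "off" it has probability (1 - p y) times its own.
  Without ties in \<Psi>, all y with near_max_off lie within \<alpha> of the unique maximiser, so these
  probabilities sum to at most 2\<lceil>\<alpha>\<rceil> + 1 and the sites y \<ge> n contribute at most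
  (2\<lceil>\<alpha>\<rceil> + 1) sup {1 - p y | y \<ge> n}. It remains to see that Z eventually leaves every window
  [0, K): with high probability some far site has its coin on and xi0 just above the maximum of
  xi0 on [0, K), and for large t its \<Psi> beats everything in [0, K). Ties have probability zero by
  independence and the absence of atoms, and maximisers exist since, by Borel--Cantelli, only
  finitely many z have \<Psi> above 1.
\<close>

section \<open>The function v - c ln v\<close>

lemma strict_mono_on_minus_mult_ln:
  fixes c :: real
  assumes "0 \<le> c"
  shows "strict_mono_on {c..} (\<lambda>v. v - c * ln v)"
proof (rule strict_mono_onI)
  fix u v assume uv: "u \<in> {c..}" "v \<in> {c..}" "u < v"
  show "u - c * ln u < v - c * ln v"
  proof (cases "c = 0")
    case False
    then have u: "0 < u" using assms uv by auto
    have "c * (ln v - ln u) < c * ((v - u) / u)"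
      using ln_diff_less[of v u] u uv False assms by (intro mult_strict_left_mono) auto
    also have "\<dots> = (v - u) * (c / u)" by simp
    also have "\<dots> \<le> v - u"
      using u uv by (intro mult_left_le) auto
    finally show ?thesis by (simp add: algebra_simps)
  qed (use uv in simp)
qed

lemma strict_antimono_on_minus_mult_ln:
  fixes c :: real
  shows "strict_antimono_on {0<..c} (\<lambda>v. v - c * ln v)"
proof (rule monotone_onI)
  fix u v assume uv: "u \<in> {0<..c}" "v \<in> {0<..c}" "u < v"
  have "c * ((v - u) / v) < c * (ln v - ln u)"
    using ln_diff_less[of u v] uv by (intro mult_strict_left_mono) (auto simp: field_simps)
  moreover have "v - u \<le> (v - u) * (c / v)"
    using uv by (intro mult_le_cancel_left1[THEN iffD2]) (auto simp: field_simps)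
  ultimately show "v - c * ln v < u - c * ln u" by (simp add: algebra_simps)
qed

lemma finite_level_set_minus_mult_ln:
  fixes c r :: real
  assumes "0 \<le> c"
  shows "finite {v. 0 < v \<and> v - c * ln v = r}"
proof -
  let ?f = "\<lambda>v. v - c * ln v"
  have "inj_on ?f {c..}"
    using strict_mono_on_minus_mult_ln[OF assms] by (rule strict_mono_on_imp_inj_on)
  moreover have "inj_on ?f {0<..c}"
    using strict_antimono_on_minus_mult_ln strict_antimono_iff_antimono by blast
  ultimately have "finite (?f -` {r} \<inter> {c..} \<union> ?f -` {r} \<inter> {0<..c})"
    by (auto intro: finite_vimage_IntI)
  then show ?thesis by (rule finite_subset[rotated]) auto
qed

lemma minus_mult_ln_le_1:
  fixes c x :: real
  assumes "1 \<le> x" "x \<le> c"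
  shows "x - c * ln x \<le> 1"
  using strict_antimono_on_minus_mult_ln[of c] assms
  by (cases "x = 1") (auto dest: monotone_onD[of _ _ _ _ 1 x])

section \<open>Deterministic facts about maximisers\<close>

lemma xi_of_nat [simp]: "xi xi0 coin (int z) \<omega> = xi0 (int z) \<omega>"
  by (simp add: xi_def)

lemma Psi_of_nat: "Psi xi0 coin t z \<omega> = xi0 (int z) \<omega> - real z / t * ln (xi0 (int z) \<omega>)"
  by (simp add: Psi_def)

lemma mem_Dset_iff:
  "z \<in> Dset xi0 coin \<omega> \<longleftrightarrow> z = 0 \<or> coin z \<omega> \<or> xi0 (int z) \<omega> = xi0 (- int z) \<omega>"
  by (cases "z = 0") (auto simp: Dset_def xi_def)

text \<open>Injectivity of \<Psi> on the naturals, written without the coins (on which \<Psi> does not depend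
  there) so that the independence argument at a single coin can ignore it.\<close>
definition Psi_distinct :: "(int \<Rightarrow> 'a \<Rightarrow> real) \<Rightarrow> real \<Rightarrow> 'a \<Rightarrow> bool" where
  "Psi_distinct xi0 t \<omega> \<longleftrightarrow> inj (\<lambda>z::nat. xi0 (int z) \<omega> - real z / t * ln (xi0 (int z) \<omega>))"

definition near_max_off ::
    "real \<Rightarrow> (int \<Rightarrow> 'a \<Rightarrow> real) \<Rightarrow> (nat \<Rightarrow> 'a \<Rightarrow> bool) \<Rightarrow> real \<Rightarrow> nat \<Rightarrow> 'a \<Rightarrow> bool" where
  "near_max_off \<alpha> xi0 coin t y \<omega> \<longleftrightarrow> (\<exists>z. \<bar>real z - real y\<bar> \<le> \<alpha> \<and> z \<in> Dset xi0 coin \<omega> - {y} \<and>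
      (\<forall>w \<in> Dset xi0 coin \<omega> - {y}. Psi xi0 coin t w \<omega> \<le> Psi xi0 coin t z \<omega>))"

definition coin_off :: "nat \<Rightarrow> (nat \<Rightarrow> 'a \<Rightarrow> bool) \<Rightarrow> nat \<Rightarrow> 'a \<Rightarrow> bool" where
  "coin_off y coin n \<omega> \<longleftrightarrow> n \<noteq> y \<and> coin n \<omega>"

lemma near_max_off_coin_off:
  "near_max_off \<alpha> xi0 (coin_off y coin) t y \<omega> = near_max_off \<alpha> xi0 coin t y \<omega>"
proof -
  have "Dset xi0 (coin_off y coin) \<omega> - {y} = Dset xi0 coin \<omega> - {y}"
    by (auto simp: mem_Dset_iff coin_off_def)
  then show ?thesis by (simp add: near_max_off_def Psi_def)
qed

lemma near_max_off_comp:
  "near_max_off \<alpha> xi0 coin t y (h \<omega>) = near_max_off \<alpha> (\<lambda>z \<omega>. xi0 z (h \<omega>)) (\<lambda>n \<omega>. coin n (h \<omega>)) t y \<omega>"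
  by (simp add: near_max_off_def Dset_def Psi_def xi_def)

lemma Psi_distinct_comp: "Psi_distinct xi0 t (h \<omega>) = Psi_distinct (\<lambda>z \<omega>. xi0 z (h \<omega>)) t \<omega>"
  by (simp add: Psi_distinct_def)

lemma is_max_D_exists:
  assumes "1 < xi0 0 \<omega>" and "finite {z. 1 < Psi xi0 coin t z \<omega>}"
  shows "\<exists>z. is_max_D xi0 coin t \<omega> z"
proof -
  let ?P = "\<lambda>z. Psi xi0 coin t z \<omega>"
  define S where "S = {z \<in> Dset xi0 coin \<omega>. ?P 0 \<le> ?P z}"
  have "?P 0 = xi0 0 \<omega>" by (simp add: Psi_def xi_def)
  then have "finite S"
    using assms by (auto simp: S_def intro: finite_subset[OF _ assms(2)])
  moreover have "0 \<in> S" by (simp add: S_def mem_Dset_iff)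
  ultimately obtain z where z: "z \<in> S" "?P z = Max (?P ` S)"
    using Max_in[of "?P ` S"] by (metis (no_types, lifting) empty_iff finite_imageI image_iff image_is_empty)
  have "?P y \<le> ?P z" if "y \<in> Dset xi0 coin \<omega>" for y
  proof (cases "y \<in> S")
    case True then show ?thesis using z \<open>finite S\<close> by simp
  next
    case False then show ?thesis using that z(1) by (auto simp: S_def)
  qed
  then show ?thesis using z(1) unfolding is_max_D_def S_def by blast
qed

lemma good_event_if_maximisers_far:
  assumes "1 < xi0 0 \<omega>" and "finite {z. 1 < Psi xi0 coin t z \<omega>}"
    and far: "\<And>z. is_max_D xi0 coin t \<omega> z \<Longrightarrow> real n + \<alpha> \<le> real z"
    and no_bad: "\<And>y. n \<le> y \<Longrightarrow> coin y \<omega> \<or> \<not> near_max_off \<alpha> xi0 coin t y \<omega>"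
  shows "good_event xi0 coin \<alpha> t \<omega>"
  unfolding good_event_def
proof (intro conjI allI impI)
  show "\<exists>z. is_max_D xi0 coin t \<omega> z" using is_max_D_exists[OF assms(1,2)] .
  fix z y assume z: "is_max_D xi0 coin t \<omega> z"
    and y: "1 \<le> y \<and> real z - \<alpha> \<le> real y \<and> real y \<le> real z + \<alpha>"
  show "y \<in> Dset xi0 coin \<omega>"
  proof (rule ccontr)
    assume y_notin: "y \<notin> Dset xi0 coin \<omega>"
    then have "near_max_off \<alpha> xi0 coin t y \<omega>"
      using z y unfolding near_max_off_def is_max_D_def by (intro exI[of _ z]) (auto simp: abs_le_iff)
    moreover have "\<not> coin y \<omega>" using y_notin by (auto simp: mem_Dset_iff)
    moreover have "n \<le> y" using far[OF z] y by linarith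
    ultimately show False using no_bad by blast
  qed
qed

lemma is_max_D_exists_if_near_max_off:
  assumes "near_max_off \<alpha> xi0 coin t y \<omega>"
  shows "\<exists>z. is_max_D xi0 coin t \<omega> z"
proof -
  let ?P = "\<lambda>z. Psi xi0 coin t z \<omega>" and ?D = "Dset xi0 coin \<omega>"
  obtain z where z: "z \<in> ?D - {y}" "\<forall>w \<in> ?D - {y}. ?P w \<le> ?P z"
    using assms unfolding near_max_off_def by blast
  show ?thesis
  proof (cases "y \<in> ?D \<and> ?P z < ?P y")
    case True
    then have "is_max_D xi0 coin t \<omega> y"
      using z unfolding is_max_D_def by (metis Diff_iff less_eq_real_def order_trans singletonD)
    then show ?thesis ..
  next
    case False
    then have "is_max_D xi0 coin t \<omega> z"
      using z unfolding is_max_D_def by (metis Diff_iff not_less singletonD)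
    then show ?thesis ..
  qed
qed

text \<open>Without ties the maximiser over D without y is the global one, unless y itself is it.\<close>
lemma near_max_off_close_to_max:
  assumes "Psi_distinct xi0 t \<omega>" and max: "is_max_D xi0 coin t \<omega> z"
    and "near_max_off \<alpha> xi0 coin t y \<omega>"
  shows "\<bar>real z - real y\<bar> \<le> \<alpha>"
proof -
  let ?P = "\<lambda>z. Psi xi0 coin t z \<omega>" and ?D = "Dset xi0 coin \<omega>"
  obtain z' where z': "\<bar>real z' - real y\<bar> \<le> \<alpha>" "z' \<in> ?D - {y}" "\<forall>w \<in> ?D - {y}. ?P w \<le> ?P z'"
    using assms(3) unfolding near_max_off_def by blast
  show ?thesis
  proof (cases "z = y")
    case False
    then have "?P z = ?P z'"
      using max z' unfolding is_max_D_def by (meson Diff_iff order_antisym singletonD)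
    then have "z = z'"
      using assms(1) unfolding Psi_distinct_def Psi_of_nat by (auto dest: injD)
    then show ?thesis using z' by simp
  qed (use z' in auto)
qed

lemma xi0_max_greater_if_coin:
  assumes max: "is_max_D xi0 coin t \<omega> z" and "coin w \<omega>" and "0 < t"
    and "1 \<le> xi0 (int z) \<omega>" and "real w * ln (xi0 (int w) \<omega>) < t"
  shows "xi0 (int w) \<omega> - 1 < xi0 (int z) \<omega>"
proof -
  have "xi0 (int w) \<omega> - 1 < Psi xi0 coin t w \<omega>"
    using assms(3,5) by (simp add: Psi_of_nat field_simps)
  also have "\<dots> \<le> Psi xi0 coin t z \<omega>"
    using max \<open>coin w \<omega>\<close> by (simp add: is_max_D_def mem_Dset_iff)
  also have "\<dots> \<le> xi0 (int z) \<omega>"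
    using assms(3,4) by (simp add: Psi_of_nat)
  finally show ?thesis .
qed

section \<open>The probabilistic model\<close>

lemma (in prob_space) AE_indep_var_if_AE_fixed:
  assumes indep: "indep_var S X T Y"
    and meas: "Measurable.pred (S \<Otimes>\<^sub>M T) (\<lambda>(u, v). P u v)"
    and ae: "\<And>u. u \<in> space S \<Longrightarrow> AE \<omega> in M. P u (Y \<omega>)"
  shows "AE \<omega> in M. P (X \<omega>) (Y \<omega>)"
proof -
  have X: "random_variable S X" and Y: "random_variable T Y"
    and joint: "distr M S X \<Otimes>\<^sub>M distr M T Y = distr M (S \<Otimes>\<^sub>M T) (\<lambda>\<omega>. (X \<omega>, Y \<omega>))"
    using indep unfolding indep_var_distribution_eq by auto
  interpret pair_prob_space "distr M S X" "distr M T Y"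
    by (simp add: pair_prob_space_def pair_sigma_finite_def prob_space_distr
        prob_space_imp_sigma_finite X Y)
  have "sets (distr M S X \<Otimes>\<^sub>M distr M T Y) = sets (S \<Otimes>\<^sub>M T)"
    by (intro sets_pair_measure_cong) simp_all
  then have sets: "{z \<in> space (distr M S X \<Otimes>\<^sub>M distr M T Y). P (fst z) (snd z)}
      \<in> sets (distr M S X \<Otimes>\<^sub>M distr M T Y)"
    using meas by (simp add: pred_def case_prod_beta cong: sets_eq_imp_space_eq)
  have "AE u in distr M S X. AE v in distr M T Y. P u v"
  proof (rule AE_I2)
    fix u assume u: "u \<in> space (distr M S X)"
    then have "Measurable.pred T (P u)"
      using measurable_Pair2[OF meas] by simp
    with ae u show "AE v in distr M T Y. P u v"
      by (simp add: AE_distr_iff[OF Y])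
  qed
  then have "AE z in distr M S X \<Otimes>\<^sub>M distr M T Y. P (fst z) (snd z)"
    using AE_pair_measure[OF sets] by simp
  then show ?thesis
    unfolding joint by (auto dest: AE_distrD[OF measurable_Pair[OF X Y]])
qed

context
  fixes N :: "'b measure" and xi0 :: "int \<Rightarrow> 'b \<Rightarrow> real" and coin :: "nat \<Rightarrow> 'b \<Rightarrow> bool"
  assumes xi0_measurable [measurable]: "\<And>z. xi0 z \<in> borel_measurable N"
    and coin_measurable [measurable]: "\<And>n. coin n \<in> measurable N (count_space UNIV)"
begin

lemma xi_measurable [measurable]: "xi xi0 coin z \<in> borel_measurable N"
  unfolding xi_def by measurable

lemma Psi_measurable [measurable]: "Psi xi0 coin t z \<in> borel_measurable N"
  unfolding Psi_def by measurable

lemma sets_Dset [measurable]: "{\<omega> \<in> space N. z \<in> Dset xi0 coin \<omega>} \<in> sets N"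
  unfolding Dset_def by measurable

lemma sets_is_max_D [measurable]: "{\<omega> \<in> space N. is_max_D xi0 coin t \<omega> z} \<in> sets N"
  unfolding is_max_D_def Ball_def by measurable

lemma sets_good_event [measurable]: "{\<omega> \<in> space N. good_event xi0 coin \<alpha> t \<omega>} \<in> sets N"
  unfolding good_event_def by measurable

lemma sets_near_max_off [measurable]: "{\<omega> \<in> space N. near_max_off \<alpha> xi0 coin t y \<omega>} \<in> sets N"
  unfolding near_max_off_def Ball_def Diff_iff singleton_iff by measurable

lemma sets_Psi_distinct [measurable]: "{\<omega> \<in> space N. Psi_distinct xi0 t \<omega>} \<in> sets N"
  unfolding Psi_distinct_def inj_def by measurable

end

locale pareto_coupling = prob_space M for M :: "'a measure" +
  fixes \<alpha> :: real and p :: "nat \<Rightarrow> real"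
    and xi0 :: "int \<Rightarrow> 'a \<Rightarrow> real" and coin :: "nat \<Rightarrow> 'a \<Rightarrow> bool"
  assumes alpha_ge_2: "2 \<le> \<alpha>"
    and p_tendsto_1: "p \<longlonglongrightarrow> 1"
    and indep: "indep_vars (\<lambda>_. borel)
           (\<lambda>i. case i of Inl z \<Rightarrow> xi0 z | Inr n \<Rightarrow> (\<lambda>\<omega>. of_bool (coin n \<omega>)))
           (UNIV :: (int + nat) set)"
    and prob_xi0_greater: "\<And>z x. 1 \<le> x \<Longrightarrow> prob {\<omega> \<in> space M. x < xi0 z \<omega>} = x powr - \<alpha>"
    and prob_coin: "\<And>n. 1 \<le> n \<Longrightarrow> prob {\<omega> \<in> space M. coin n \<omega>} = p n"
begin

definition var :: "int + nat \<Rightarrow> 'a \<Rightarrow> real" where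
  "var i = (case i of Inl z \<Rightarrow> xi0 z | Inr n \<Rightarrow> (\<lambda>\<omega>. of_bool (coin n \<omega>)))"

lemma indep_vars_var: "indep_vars (\<lambda>_. borel) var UNIV"
  using indep unfolding var_def .

lemma measurable_var: "var i \<in> borel_measurable M"
  using indep_vars_var unfolding indep_vars_def by auto

lemma measurable_xi0 [measurable]: "xi0 z \<in> borel_measurable M"
  using measurable_var[of "Inl z"] by (simp add: var_def)

lemma measurable_coin [measurable]: "coin n \<in> measurable M (count_space UNIV)"
proof -
  have "(\<lambda>\<omega>. of_bool (coin n \<omega>) :: real) \<in> borel_measurable M"
    using measurable_var[of "Inr n"] by (simp add: var_def)
  then have "{\<omega> \<in> space M. (of_bool (coin n \<omega>) :: real) = 1} \<in> sets M" by measurable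
  then show ?thesis by (simp add: pred_def[symmetric])
qed

lemmas [measurable] =
  sets_is_max_D[OF measurable_xi0 measurable_coin]
  sets_good_event[OF measurable_xi0 measurable_coin]
  sets_near_max_off[OF measurable_xi0 measurable_coin]
  sets_Psi_distinct[OF measurable_xi0 measurable_coin]

lemma p_le_1: "1 \<le> n \<Longrightarrow> p n \<le> 1"
  using prob_coin[of n] by (metis prob_le_1)

lemma prob_not_coin:
  assumes "1 \<le> n"
  shows "prob {\<omega> \<in> space M. \<not> coin n \<omega>} = 1 - p n"
proof -
  have "{\<omega> \<in> space M. \<not> coin n \<omega>} = space M - {\<omega> \<in> space M. coin n \<omega>}" by auto
  then show ?thesis using assms by (simp add: prob_compl prob_coin)
qed

lemma prob_xi0_interval:
  assumes "1 \<le> a" "a \<le> b"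
  shows "prob {\<omega> \<in> space M. a < xi0 z \<omega> \<and> xi0 z \<omega> \<le> b} = a powr - \<alpha> - b powr - \<alpha>"
proof -
  have "{\<omega> \<in> space M. a < xi0 z \<omega> \<and> xi0 z \<omega> \<le> b} =
      {\<omega> \<in> space M. a < xi0 z \<omega>} - {\<omega> \<in> space M. b < xi0 z \<omega>}"
    by auto
  also have "prob \<dots> = prob {\<omega> \<in> space M. a < xi0 z \<omega>} - prob {\<omega> \<in> space M. b < xi0 z \<omega>}"
    using assms by (intro finite_measure_Diff) auto
  finally show ?thesis using assms by (simp add: prob_xi0_greater)
qed

lemma AE_xi0_greater_1: "AE \<omega> in M. \<forall>z. 1 < xi0 z \<omega>"
proof (subst AE_all_countable, intro allI)
  fix z
  have "{\<omega> \<in> space M. \<not> 1 < xi0 z \<omega>} = space M - {\<omega> \<in> space M. 1 < xi0 z \<omega>}" by auto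
  then have "prob {\<omega> \<in> space M. \<not> 1 < xi0 z \<omega>} = 0"
    using prob_xi0_greater[of 1 z] by (simp add: prob_compl)
  then show "AE \<omega> in M. 1 < xi0 z \<omega>"
    by (subst (asm) prob_Collect_eq_0) simp_all
qed

lemma AE_xi0_neq: "AE \<omega> in M. xi0 z \<omega> \<noteq> a"
proof (cases "a \<le> 1")
  case True
  show ?thesis
    using AE_xi0_greater_1 True by (auto elim!: eventually_mono dest: spec[of _ z])
next
  case False
  let ?A = "{\<omega> \<in> space M. xi0 z \<omega> = a}"
  have "1 < a" using False by simp
  have "\<forall>\<^sub>F b in at_left a. prob ?A \<le> b powr - \<alpha> - a powr - \<alpha>"
    using eventually_at_left_real[OF \<open>1 < a\<close>]
  proof eventually_elim
    case (elim b)
    then have "prob ?A \<le> prob {\<omega> \<in> space M. b < xi0 z \<omega> \<and> xi0 z \<omega> \<le> a}"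
      by (intro finite_measure_mono) auto
    also have "\<dots> = b powr - \<alpha> - a powr - \<alpha>"
      using elim by (intro prob_xi0_interval) auto
    finally show ?case .
  qed
  moreover have "((\<lambda>b. b powr - \<alpha> - a powr - \<alpha>) \<longlongrightarrow> a powr - \<alpha> - a powr - \<alpha>) (at_left a)"
    using False by (intro tendsto_intros) auto
  ultimately have "prob ?A \<le> 0"
    using tendsto_lowerbound trivial_limit_at_left_real by fastforce
  then have "prob ?A = 0" using measure_nonneg[of M ?A] by linarith
  then show ?thesis by (subst (asm) prob_Collect_eq_0) simp_all
qed

lemma AE_xi0_level_set:
  assumes "0 \<le> c"
  shows "AE \<omega> in M. xi0 z \<omega> - c * ln (xi0 z \<omega>) \<noteq> r"
proof -
  let ?L = "{v. 0 < v \<and> v - c * ln v = r}"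
  have "AE \<omega> in M. \<forall>v\<in>?L. xi0 z \<omega> \<noteq> v"
    using finite_level_set_minus_mult_ln[OF assms] by (rule AE_finite_allI) (rule AE_xi0_neq)
  then show ?thesis
    using AE_xi0_greater_1
  proof eventually_elim
    case (elim \<omega>)
    then have "0 < xi0 z \<omega>" by (meson less_trans zero_less_one)
    with elim(1) show ?case by blast
  qed
qed

lemma indep_var_var:
  assumes "i \<noteq> j"
  shows "indep_var borel (var i) borel (var j)"
proof -
  have "indep_var (PiM {i} (\<lambda>_. borel)) (\<lambda>\<omega>. restrict (\<lambda>k. var k \<omega>) {i})
                  (PiM {j} (\<lambda>_. borel)) (\<lambda>\<omega>. restrict (\<lambda>k. var k \<omega>) {j})"
    using assms by (intro indep_var_restrict[OF indep_vars_var]) auto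
  then have "indep_var borel ((\<lambda>f. f i) \<circ> (\<lambda>\<omega>. restrict (\<lambda>k. var k \<omega>) {i}))
                  borel ((\<lambda>f. f j) \<circ> (\<lambda>\<omega>. restrict (\<lambda>k. var k \<omega>) {j}))"
    by (rule indep_var_compose) (auto intro: measurable_component_singleton)
  then show ?thesis by (simp add: comp_def)
qed

lemma AE_Psi_distinct:
  assumes "0 < t"
  shows "AE \<omega> in M. Psi_distinct xi0 t \<omega>"
proof -
  have pair_distinct: "AE \<omega> in M. xi0 z1 \<omega> - c1 * ln (xi0 z1 \<omega>) \<noteq> xi0 z2 \<omega> - c2 * ln (xi0 z2 \<omega>)"
    if "z1 \<noteq> z2" "0 \<le> c1" "0 \<le> c2" for z1 z2 :: int and c1 c2 :: real
  proof (rule AE_indep_var_if_AE_fixed[where P = "\<lambda>u v. u - c1 * ln u \<noteq> v - c2 * ln v"])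
    show "indep_var borel (xi0 z1) borel (xi0 z2)"
      using indep_var_var[of "Inl z1" "Inl z2"] that(1) by (simp add: var_def)
    show "Measurable.pred (borel \<Otimes>\<^sub>M borel) (\<lambda>(u, v). u - c1 * ln u \<noteq> v - c2 * ln v)"
      by measurable
    show "AE \<omega> in M. u - c1 * ln u \<noteq> xi0 z2 \<omega> - c2 * ln (xi0 z2 \<omega>)" for u
      using AE_xi0_level_set[OF that(3), of z2 "u - c1 * ln u"] by (auto elim: eventually_mono)
  qed
  then have "AE \<omega> in M. \<forall>z1 z2::nat. z1 \<noteq> z2 \<longrightarrow>
      xi0 z1 \<omega> - real z1 / t * ln (xi0 z1 \<omega>) \<noteq> xi0 z2 \<omega> - real z2 / t * ln (xi0 z2 \<omega>)"
  proof (simp only: AE_all_countable, intro allI)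
    fix z1 z2 :: nat
    show "AE \<omega> in M. z1 \<noteq> z2 \<longrightarrow>
        xi0 z1 \<omega> - real z1 / t * ln (xi0 z1 \<omega>) \<noteq> xi0 z2 \<omega> - real z2 / t * ln (xi0 z2 \<omega>)"
    proof (cases "z1 = z2")
      case False
      then show ?thesis
        using pair_distinct[of z1 z2 "real z1 / t" "real z2 / t"] assms by (auto elim: eventually_mono)
    qed simp
  qed
  then show ?thesis
    unfolding Psi_distinct_def inj_def by (auto elim: eventually_mono)
qed

text \<open>Borel--Cantelli: a.s. only finitely many z have xi0 z > z / t, and every other z \<ge> t
  has Psi at most 1.\<close>
lemma AE_finite_Psi_greater_1:
  assumes t: "0 < t"
  shows "AE \<omega> in M. finite {z. 1 < Psi xi0 coin t z \<omega>}"
proof -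
  define A where "A n = {\<omega> \<in> space M. max 1 (real n / t) < xi0 (int n) \<omega>}" for n
  have "summable (\<lambda>n. real n powr - \<alpha> / t powr - \<alpha>)"
    using alpha_ge_2 by (intro summable_divide) (simp add: summable_real_powr_iff)
  then have "summable (\<lambda>n. measure M (A n))"
  proof (rule summable_comparison_test'[where N = 1])
    fix n :: nat assume "1 \<le> n"
    have "measure M (A n) = max 1 (real n / t) powr - \<alpha>"
      unfolding A_def by (rule prob_xi0_greater) simp
    also have "\<dots> \<le> (real n / t) powr - \<alpha>"
      using \<open>1 \<le> n\<close> t alpha_ge_2 by (intro powr_mono2') auto
    finally have "norm (measure M (A n)) \<le> (real n / t) powr - \<alpha>" by simp
    then show "norm (measure M (A n)) \<le> real n powr - \<alpha> / t powr - \<alpha>"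
      by (simp add: powr_divide)
  qed
  then have "AE \<omega> in M. \<forall>\<^sub>F n in sequentially. \<omega> \<in> space M - A n"
    by (intro borel_cantelli_AE1) (auto simp: A_def less_top[symmetric])
  then show ?thesis
    using AE_xi0_greater_1 AE_space
  proof eventually_elim
    case (elim \<omega>)
    then obtain n0 where n0: "\<And>n. n0 \<le> n \<Longrightarrow> \<omega> \<notin> A n"
      by (auto simp: eventually_sequentially)
    have "z < max n0 (nat \<lceil>t\<rceil>)" if z: "1 < Psi xi0 coin t z \<omega>" for z
    proof (rule ccontr)
      assume "\<not> ?thesis"
      then have "t \<le> real z" and "\<omega> \<notin> A z" using n0 by (auto simp: not_less)
      then have "xi0 (int z) \<omega> \<le> real z / t" using elim t by (auto simp: A_def)
      moreover have "1 \<le> xi0 (int z) \<omega>" using elim(2) by (simp add: less_imp_le)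
      ultimately have "Psi xi0 coin t z \<omega> \<le> 1"
        unfolding Psi_of_nat by (rule minus_mult_ln_le_1[rotated])
      with z show False by simp
    qed
    then show ?case by (auto intro: finite_subset[of _ "{..<max n0 (nat \<lceil>t\<rceil>)}"])
  qed
qed

definition near_max_event :: "real \<Rightarrow> nat \<Rightarrow> 'a set" where
  "near_max_event t y = {\<omega> \<in> space M. near_max_off \<alpha> xi0 coin t y \<omega> \<and> Psi_distinct xi0 t \<omega>}"

lemma sets_near_max_event [measurable]: "near_max_event t y \<in> sets M"
proof -
  have eq: "near_max_event t y =
      {\<omega> \<in> space M. near_max_off \<alpha> xi0 coin t y \<omega>} \<inter> {\<omega> \<in> space M. Psi_distinct xi0 t \<omega>}"
    by (auto simp: near_max_event_def)
  show ?thesis unfolding eq by (intro sets.Int sets_near_max_off[OF measurable_xi0 measurable_coin]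
      sets_Psi_distinct[OF measurable_xi0 measurable_coin])
qed

definition others :: "nat \<Rightarrow> 'a \<Rightarrow> int + nat \<Rightarrow> real" where
  "others y \<omega> = restrict (\<lambda>i. var i \<omega>) (UNIV - {Inr y})"

lemma prob_not_coin_others:
  assumes "1 \<le> y" and S: "S \<in> sets (PiM (UNIV - {Inr y}) (\<lambda>_. borel))"
  shows "prob {\<omega> \<in> space M. \<not> coin y \<omega> \<and> others y \<omega> \<in> S} =
    (1 - p y) * prob {\<omega> \<in> space M. others y \<omega> \<in> S}"
proof -
  let ?N = "PiM {Inr y :: int + nat} (\<lambda>_. borel :: real measure)"
  define Y where "Y \<omega> = restrict (\<lambda>i. var i \<omega>) {Inr y}" for \<omega>
  define T where "T = {f \<in> space ?N. f (Inr y) = 0}"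
  have "indep_var ?N Y (PiM (UNIV - {Inr y}) (\<lambda>_. borel)) (others y)"
    unfolding Y_def others_def by (rule indep_var_restrict[OF indep_vars_var]) auto
  moreover have [measurable]: "(\<lambda>f. f (Inr y)) \<in> measurable ?N borel"
    by (rule measurable_component_singleton) simp
  then have "T \<in> sets ?N" unfolding T_def by measurable
  ultimately have "prob ((\<lambda>\<omega>. (Y \<omega>, others y \<omega>)) -` (T \<times> S) \<inter> space M) =
      prob (Y -` T \<inter> space M) * prob (others y -` S \<inter> space M)"
    using S by (rule indep_varD)
  moreover have "Y \<omega> \<in> T \<longleftrightarrow> \<not> coin y \<omega>" for \<omega>
    by (simp add: T_def Y_def space_PiM var_def)
  ultimately show ?thesis
    using prob_not_coin[OF \<open>1 \<le> y\<close>] by (simp add: vimage_def Int_def conj_commute)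
qed

lemma prob_not_coin_near_max_event:
  assumes "1 \<le> y"
  shows "prob ({\<omega> \<in> space M. \<not> coin y \<omega>} \<inter> near_max_event t y) = (1 - p y) * prob (near_max_event t y)"
proof -
  let ?N = "PiM (UNIV - {Inr y}) (\<lambda>_. borel :: real measure)"
  define xi0' where "xi0' z f = f (Inl z)" for z and f :: "int + nat \<Rightarrow> real"
  define coin' where "coin' n f \<longleftrightarrow> n \<noteq> y \<and> f (Inr n) = 1" for n and f :: "int + nat \<Rightarrow> real"
  have xi0'_measurable: "xi0' z \<in> borel_measurable ?N" for z
    unfolding xi0'_def by (rule measurable_component_singleton) simp
  have coin'_measurable: "coin' n \<in> measurable ?N (count_space UNIV)" for n
  proof (cases "n = y")
    case False
    have [measurable]: "(\<lambda>f. f (Inr n)) \<in> measurable ?N borel"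
      by (rule measurable_component_singleton) (simp add: False)
    show ?thesis unfolding coin'_def by measurable
  next
    case True
    then have "coin' n = (\<lambda>_. False)" by (simp add: coin'_def fun_eq_iff)
    then show ?thesis by simp
  qed
  define S where "S = {f \<in> space ?N. near_max_off \<alpha> xi0' coin' t y f} \<inter> {f \<in> space ?N. Psi_distinct xi0' t f}"
  have S: "S \<in> sets ?N"
    unfolding S_def using xi0'_measurable coin'_measurable
    by (intro sets.Int sets_near_max_off sets_Psi_distinct)
  have xi0_others: "(\<lambda>z \<omega>. xi0' z (others y \<omega>)) = xi0"
    by (simp add: xi0'_def others_def var_def fun_eq_iff)
  have coin_others: "(\<lambda>n \<omega>. coin' n (others y \<omega>)) = coin_off y coin"
    by (simp add: coin'_def others_def var_def fun_eq_iff coin_off_def)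
  have "others y \<omega> \<in> S \<longleftrightarrow> near_max_off \<alpha> xi0 coin t y \<omega> \<and> Psi_distinct xi0 t \<omega>" for \<omega>
  proof -
    have "others y \<omega> \<in> space ?N" by (simp add: others_def space_PiM)
    then have "others y \<omega> \<in> S \<longleftrightarrow>
        near_max_off \<alpha> xi0' coin' t y (others y \<omega>) \<and> Psi_distinct xi0' t (others y \<omega>)"
      by (simp add: S_def)
    also have "\<dots> \<longleftrightarrow> near_max_off \<alpha> xi0 coin t y \<omega> \<and> Psi_distinct xi0 t \<omega>"
      by (simp only: near_max_off_comp[where h = "others y"] Psi_distinct_comp[where h = "others y"]
          xi0_others coin_others near_max_off_coin_off)
    finally show ?thesis .
  qed
  then have "near_max_event t y = {\<omega> \<in> space M. others y \<omega> \<in> S}"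
    and "{\<omega> \<in> space M. \<not> coin y \<omega>} \<inter> near_max_event t y =
      {\<omega> \<in> space M. \<not> coin y \<omega> \<and> others y \<omega> \<in> S}"
    by (auto simp: near_max_event_def)
  with prob_not_coin_others[OF assms S] show ?thesis by simp
qed

lemma sum_indicator_near_max_event_le:
  "(\<Sum>y. indicator (near_max_event t y) \<omega>) \<le> (of_nat (2 * nat \<lceil>\<alpha>\<rceil> + 1) :: ennreal)"
proof (cases "\<exists>y. \<omega> \<in> near_max_event t y")
  case False
  then show ?thesis by simp
next
  case True
  define A where "A = nat \<lceil>\<alpha>\<rceil>"
  obtain y0 where "near_max_off \<alpha> xi0 coin t y0 \<omega>"
    using True by (auto simp: near_max_event_def)
  then obtain z where z: "is_max_D xi0 coin t \<omega> z"
    by (blast dest: is_max_D_exists_if_near_max_off)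
  have near: "y \<in> {z - A .. z + A}" if "\<omega> \<in> near_max_event t y" for y
  proof -
    have "\<bar>real z - real y\<bar> \<le> \<alpha>"
      using that z by (auto simp: near_max_event_def intro: near_max_off_close_to_max)
    moreover have "\<alpha> \<le> real A" unfolding A_def by linarith
    ultimately show ?thesis by auto
  qed
  have "(\<Sum>y. indicator (near_max_event t y) \<omega> :: ennreal) =
      (\<Sum>y\<in>{z - A .. z + A}. indicator (near_max_event t y) \<omega>)"
    using near by (intro suminf_finite) (auto simp: indicator_def)
  also have "\<dots> \<le> (\<Sum>y\<in>{z - A .. z + A}. 1)"
    by (intro sum_mono) (simp add: indicator_def)
  also have "\<dots> = of_nat (card {z - A .. z + A})" by simp
  also have "card {z - A .. z + A} \<le> 2 * A + 1" by simp
  then have "(of_nat (card {z - A .. z + A}) :: ennreal) \<le> of_nat (2 * A + 1)"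
    by (simp only: of_nat_le_iff)
  finally show ?thesis unfolding A_def .
qed

lemma prob_bad_sites_le:
  assumes "0 \<le> \<delta>" and "1 \<le> n" and q: "\<And>y. n \<le> y \<Longrightarrow> 1 - p y \<le> \<delta>"
  shows "prob (\<Union>y\<in>{n..}. {\<omega> \<in> space M. \<not> coin y \<omega>} \<inter> near_max_event t y)
    \<le> \<delta> * (2 * nat \<lceil>\<alpha>\<rceil> + 1)"
proof -
  define B where "B y = (if n \<le> y then {\<omega> \<in> space M. \<not> coin y \<omega>} \<inter> near_max_event t y else {})" for y
  have B_sets: "B y \<in> sets M" for y
    by (simp add: B_def)
  have B_le: "emeasure M (B y) \<le> ennreal \<delta> * emeasure M (near_max_event t y)" for y
  proof (cases "n \<le> y")
    case True
    then have "emeasure M (B y) = ennreal ((1 - p y) * prob (near_max_event t y))"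
      using assms(2) by (simp add: B_def emeasure_eq_measure prob_not_coin_near_max_event)
    also have "\<dots> \<le> ennreal (\<delta> * prob (near_max_event t y))"
      using q[OF True] by (intro ennreal_leI mult_right_mono) auto
    finally show ?thesis
      using assms(1) by (simp add: ennreal_mult emeasure_eq_measure)
  qed (simp add: B_def)
  have "(\<Union>y\<in>{n..}. {\<omega> \<in> space M. \<not> coin y \<omega>} \<inter> near_max_event t y) = (\<Union>y. B y)"
    by (auto simp: B_def split: if_splits)
  also have "emeasure M (\<Union>y. B y) \<le> (\<Sum>y. ennreal \<delta> * emeasure M (near_max_event t y))"
    using B_sets by (intro order_trans[OF emeasure_subadditive_countably] suminf_le B_le) auto
  also have "\<dots> = ennreal \<delta> * \<integral>\<^sup>+\<omega>. (\<Sum>y. indicator (near_max_event t y) \<omega>) \<partial>M"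
    by (subst nn_integral_suminf) simp_all
  also have "\<dots> \<le> ennreal \<delta> * \<integral>\<^sup>+\<omega>. of_nat (2 * nat \<lceil>\<alpha>\<rceil> + 1) \<partial>M"
    by (intro mult_left_mono nn_integral_mono sum_indicator_near_max_event_le) simp
  also have "\<dots> = ennreal (\<delta> * (2 * nat \<lceil>\<alpha>\<rceil> + 1))"
    using assms(1) by (simp add: emeasure_space_1 ennreal_of_nat_eq_real_of_nat ennreal_mult)
  finally show ?thesis
    using assms(1) by (simp add: emeasure_eq_measure ennreal_le_iff)
qed

lemma prob_coin_xi0_interval:
  assumes "1 \<le> a" "a \<le> b" and "1 \<le> w"
  shows "prob {\<omega> \<in> space M. coin w \<omega> \<and> a < xi0 (int w) \<omega> \<and> xi0 (int w) \<omega> \<le> b} =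
    p w * (a powr - \<alpha> - b powr - \<alpha>)"
proof -
  define J where "J = {Inl (int w), Inr w :: int + nat}"
  define A where "A i = (case i of Inl _ \<Rightarrow> {a<..b} | Inr _ \<Rightarrow> {1::real})" for i :: "int + nat"
  have "prob (\<Inter>i\<in>J. var i -` A i \<inter> space M) = (\<Prod>i\<in>J. prob (var i -` A i \<inter> space M))"
    by (rule indep_varsD[OF indep_vars_var]) (auto simp: J_def A_def split: sum.splits)
  moreover have "(\<Inter>i\<in>J. var i -` A i \<inter> space M) =
      {\<omega> \<in> space M. coin w \<omega> \<and> a < xi0 (int w) \<omega> \<and> xi0 (int w) \<omega> \<le> b}"
    by (auto simp: J_def A_def var_def)
  moreover have "var (Inl (int w)) -` A (Inl (int w)) \<inter> space M =
      {\<omega> \<in> space M. a < xi0 (int w) \<omega> \<and> xi0 (int w) \<omega> \<le> b}"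
    and "var (Inr w) -` A (Inr w) \<inter> space M = {\<omega> \<in> space M. coin w \<omega>}"
    by (auto simp: A_def var_def)
  ultimately show ?thesis
    using assms by (simp add: J_def prob_xi0_interval prob_coin mult.commute)
qed

lemma prob_no_coin_xi0_interval:
  assumes ab: "1 \<le> a" "a \<le> b" and W: "finite W" "\<And>w. w \<in> W \<Longrightarrow> 1 \<le> w"
  shows "prob {\<omega> \<in> space M. \<forall>w\<in>W. \<not> (coin w \<omega> \<and> a < xi0 (int w) \<omega> \<and> xi0 (int w) \<omega> \<le> b)} =
    (\<Prod>w\<in>W. 1 - p w * (a powr - \<alpha> - b powr - \<alpha>))"
proof (cases "W = {}")
  case False
  define K where "K w = {Inl (int w), Inr w :: int + nat}" for w
  define Y where "Y w \<omega> = restrict (\<lambda>i. var i \<omega>) (K w)" for w \<omega>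
  have indep_Y: "indep_vars (\<lambda>w. PiM (K w) (\<lambda>_. borel :: real measure)) Y W"
    unfolding Y_def
    by (rule indep_vars_restrict[OF indep_vars_var]) (auto simp: disjoint_family_on_def K_def)
  define A where "A w = {f \<in> space (PiM (K w) (\<lambda>_. borel :: real measure)).
      \<not> (f (Inr w) = 1 \<and> a < f (Inl (int w)) \<and> f (Inl (int w)) \<le> b)}" for w
  have A_sets: "A w \<in> sets (PiM (K w) (\<lambda>_. borel))" for w
  proof -
    have [measurable]: "(\<lambda>f. f i) \<in> measurable (PiM (K w) (\<lambda>_. borel :: real measure)) borel"
      if "i \<in> K w" for i
      using that by (rule measurable_component_singleton)
    show ?thesis unfolding A_def by (measurable, auto simp: K_def)
  qed
  have Y_A: "Y w -` A w \<inter> space M =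
      space M - {\<omega> \<in> space M. coin w \<omega> \<and> a < xi0 (int w) \<omega> \<and> xi0 (int w) \<omega> \<le> b}" for w
    by (auto simp: Y_def A_def K_def var_def space_PiM)
  have "prob (\<Inter>w\<in>W. Y w -` A w \<inter> space M) = (\<Prod>w\<in>W. prob (Y w -` A w \<inter> space M))"
    by (rule indep_varsD[OF indep_Y False W(1) order_refl A_sets])
  moreover have "(\<Inter>w\<in>W. Y w -` A w \<inter> space M) =
      {\<omega> \<in> space M. \<forall>w\<in>W. \<not> (coin w \<omega> \<and> a < xi0 (int w) \<omega> \<and> xi0 (int w) \<omega> \<le> b)}"
    using False by (auto simp: Y_A)
  ultimately show ?thesis
    using W(2) by (simp add: Y_A prob_compl prob_coin_xi0_interval[OF ab])
qed (simp add: prob_space)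


lemma prob_no_coin_xi0_interval_le:
  assumes "1 \<le> a" "a \<le> b"
  obtains n where "\<And>m. prob {\<omega> \<in> space M. \<forall>w\<in>{n..<n + m}.
      \<not> (coin w \<omega> \<and> a < xi0 (int w) \<omega> \<and> xi0 (int w) \<omega> \<le> b)} \<le> (1 - (a powr - \<alpha> - b powr - \<alpha>) / 2) ^ m"
proof -
  define c where "c = a powr - \<alpha> - b powr - \<alpha>"
  have "b powr - \<alpha> \<le> a powr - \<alpha>" "a powr - \<alpha> \<le> 1"
    using assms alpha_ge_2 powr_mono2'[of "- \<alpha>" a b] powr_mono2'[of "- \<alpha>" 1 a] by auto
  moreover have "0 \<le> b powr - \<alpha>" by simp
  ultimately have "0 \<le> c" "c \<le> 1" unfolding c_def by linarith+
  obtain n0 where n0: "\<And>n. n0 \<le> n \<Longrightarrow> 1 / 2 < p n"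
    using order_tendstoD(1)[OF p_tendsto_1, of "1 / 2"] by (auto simp: eventually_sequentially)
  define n where "n = max 1 n0"
  have "1 - p w * c \<le> 1 - c / 2" and "0 \<le> 1 - p w * c" if "n \<le> w" for w
  proof -
    have "1 / 2 \<le> p w" "p w \<le> 1" using that n0[of w] p_le_1[of w] by (auto simp: n_def)
    moreover have "1 / 2 * c \<le> p w * c"
      using \<open>1 / 2 \<le> p w\<close> \<open>0 \<le> c\<close> by (rule mult_right_mono)
    ultimately show "1 - p w * c \<le> 1 - c / 2" "0 \<le> 1 - p w * c"
      using \<open>0 \<le> c\<close> \<open>c \<le> 1\<close> by (auto intro: mult_le_one)
  qed
  then have bound: "(\<Prod>w\<in>{n..<n + m}. 1 - p w * c) \<le> (1 - c / 2) ^ m" for m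
    using prod_mono[of "{n..<n + m}" "\<lambda>w. 1 - p w * c" "\<lambda>_. 1 - c / 2"] by simp
  have prob_eq: "prob {\<omega> \<in> space M. \<forall>w\<in>{n..<n + m}.
      \<not> (coin w \<omega> \<and> a < xi0 (int w) \<omega> \<and> xi0 (int w) \<omega> \<le> b)} = (\<Prod>w\<in>{n..<n + m}. 1 - p w * c)" for m
    unfolding c_def by (rule prob_no_coin_xi0_interval) (use assms in \<open>auto simp: n_def\<close>)
  show ?thesis
    by (rule that[of n]) (use bound prob_eq in \<open>simp add: c_def\<close>)
qed

lemma prob_no_coin_xi0_interval_small:
  assumes "1 \<le> a" "a < b" "0 < \<epsilon>"
  obtains n N where "prob {\<omega> \<in> space M. \<forall>w\<in>{n..<N}.
    \<not> (coin w \<omega> \<and> a < xi0 (int w) \<omega> \<and> xi0 (int w) \<omega> \<le> b)} \<le> \<epsilon>"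
proof -
  define c where "c = a powr - \<alpha> - b powr - \<alpha>"
  have "b powr - \<alpha> < a powr - \<alpha>"
    using assms alpha_ge_2 by (intro powr_less_mono2_neg) auto
  moreover have "a powr - \<alpha> \<le> 1"
    using assms alpha_ge_2 powr_mono2'[of "- \<alpha>" 1 a] by simp
  moreover have "0 \<le> b powr - \<alpha>" by simp
  ultimately have "0 < c" "c \<le> 1" unfolding c_def by linarith+
  then have "\<forall>\<^sub>F m in sequentially. (1 - c / 2) ^ m < \<epsilon>"
    using assms by (intro order_tendstoD(2)[OF LIMSEQ_realpow_zero]) auto
  then obtain m where m: "(1 - c / 2) ^ m \<le> \<epsilon>"
    by (metis eventually_sequentially le_refl less_imp_le)
  obtain n where n: "prob {\<omega> \<in> space M. \<forall>w\<in>{n..<n + m}.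
      \<not> (coin w \<omega> \<and> a < xi0 (int w) \<omega> \<and> xi0 (int w) \<omega> \<le> b)} \<le> (1 - c / 2) ^ m"
    using prob_no_coin_xi0_interval_le[of a b] assms unfolding c_def by auto
  show ?thesis
    by (rule that[of n "n + m"]) (use m n in linarith)
qed

lemma prob_exists_xi0_greater_le:
  assumes "1 \<le> x"
  shows "prob {\<omega> \<in> space M. \<exists>j<K. x < xi0 (int j) \<omega>} \<le> real K * x powr - \<alpha>"
proof -
  have "prob {\<omega> \<in> space M. \<exists>j<K. x < xi0 (int j) \<omega>} =
      prob (\<Union>j\<in>{..<K}. {\<omega> \<in> space M. x < xi0 (int j) \<omega>})"
    by (intro arg_cong[where f = prob]) auto
  also have "\<dots> \<le> (\<Sum>j<K. prob {\<omega> \<in> space M. x < xi0 (int j) \<omega>})"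
    by (intro finite_measure_subadditive_finite) auto
  also have "\<dots> = real K * x powr - \<alpha>" using assms by (simp add: prob_xi0_greater)
  finally show ?thesis .
qed

text \<open>A site w < N whose coin is open and whose xi0 lies in (M0 + 1, M0 + 2] has Psi above M0
  once t > N ln (M0 + 2), so it beats every z < K unless xi0 exceeds M0 somewhere below K.\<close>
lemma AE_max_below_imp:
  assumes "1 \<le> M0" and "real N * ln (M0 + 2) < t"
  shows "AE \<omega> in M. (\<exists>z. is_max_D xi0 coin t \<omega> z \<and> z < K) \<longrightarrow> (\<exists>j<K. M0 < xi0 (int j) \<omega>) \<or>
    (\<forall>w\<in>{n..<N}. \<not> (coin w \<omega> \<and> M0 + 1 < xi0 (int w) \<omega> \<and> xi0 (int w) \<omega> \<le> M0 + 2))"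
  using AE_xi0_greater_1
proof (rule eventually_mono, safe)
  fix \<omega> z w assume gt_1: "\<forall>i. 1 < xi0 i \<omega>" and max: "is_max_D xi0 coin t \<omega> z" and "z < K"
    and below: "\<not> (\<exists>j<K. M0 < xi0 (int j) \<omega>)" and w: "w \<in> {n..<N}" "coin w \<omega>"
    and "M0 + 1 < xi0 (int w) \<omega>" "xi0 (int w) \<omega> \<le> M0 + 2"
  have "0 \<le> real N * ln (M0 + 2)" using assms(1) by simp
  then have "0 < t" using assms(2) by linarith
  have "1 < xi0 (int w) \<omega>" using gt_1 by blast
  then have "real w * ln (xi0 (int w) \<omega>) \<le> real N * ln (M0 + 2)"
    using w \<open>xi0 (int w) \<omega> \<le> M0 + 2\<close> assms(1) by (intro mult_mono) auto
  then have "xi0 (int w) \<omega> - 1 < xi0 (int z) \<omega>"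
    using gt_1 \<open>0 < t\<close> assms(2)
    by (intro xi0_max_greater_if_coin[OF max \<open>coin w \<omega>\<close>]) (auto intro: less_imp_le)
  moreover have "xi0 (int z) \<omega> \<le> M0" using below \<open>z < K\<close> by auto
  ultimately show False using \<open>M0 + 1 < xi0 (int w) \<omega>\<close> by simp
qed

lemma eventually_prob_max_below_le:
  assumes "0 < \<epsilon>"
  shows "\<forall>\<^sub>F t in at_top. prob {\<omega> \<in> space M. \<exists>z. is_max_D xi0 coin t \<omega> z \<and> z < K} \<le> \<epsilon>"
proof -
  define M0 where "M0 = max 1 (2 * real K / \<epsilon>)"
  have M0: "1 \<le> M0" "2 * real K / \<epsilon> \<le> M0" by (auto simp: M0_def)
  define U where "U = {\<omega> \<in> space M. \<exists>j<K. M0 < xi0 (int j) \<omega>}"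
  have "prob U \<le> real K * M0 powr - \<alpha>"
    unfolding U_def by (rule prob_exists_xi0_greater_le[OF M0(1)])
  also have "\<dots> \<le> real K * M0 powr - 1"
    using M0 alpha_ge_2 by (intro mult_left_mono powr_mono) auto
  also have "\<dots> \<le> \<epsilon> / 2"
    using M0 assms by (simp add: powr_minus_divide field_simps)
  finally have U: "prob U \<le> \<epsilon> / 2" .
  obtain n N where H: "prob {\<omega> \<in> space M. \<forall>w\<in>{n..<N}.
      \<not> (coin w \<omega> \<and> M0 + 1 < xi0 (int w) \<omega> \<and> xi0 (int w) \<omega> \<le> M0 + 2)} \<le> \<epsilon> / 2"
    using prob_no_coin_xi0_interval_small[of "M0 + 1" "M0 + 2" "\<epsilon> / 2"] M0 assms by auto
  define H where "H = {\<omega> \<in> space M. \<forall>w\<in>{n..<N}.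
      \<not> (coin w \<omega> \<and> M0 + 1 < xi0 (int w) \<omega> \<and> xi0 (int w) \<omega> \<le> M0 + 2)}"
  have U_sets: "U \<in> sets M" and H_sets: "H \<in> sets M"
    unfolding U_def H_def by measurable
  show ?thesis
    using eventually_gt_at_top[of "real N * ln (M0 + 2)"]
  proof eventually_elim
    case (elim t)
    have "prob {\<omega> \<in> space M. \<exists>z. is_max_D xi0 coin t \<omega> z \<and> z < K} \<le> prob (U \<union> H)"
      using AE_max_below_imp[OF M0(1) elim, of K n] H_sets unfolding U_def H_def
      by (intro finite_measure_mono_AE) (auto elim!: eventually_mono)
    also have "\<dots> \<le> \<epsilon>"
      using measure_Un_le[OF U_sets H_sets] U H unfolding H_def by linarith
    finally show ?case .
  qed
qed

lemma AE_good_event: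
  assumes "0 < t" and "real n + \<alpha> \<le> real K"
  shows "AE \<omega> in M. good_event xi0 coin \<alpha> t \<omega> \<or> (\<exists>z. is_max_D xi0 coin t \<omega> z \<and> z < K) \<or>
    (\<exists>y\<ge>n. \<not> coin y \<omega> \<and> \<omega> \<in> near_max_event t y)"
  using AE_xi0_greater_1 AE_Psi_distinct[OF assms(1)] AE_finite_Psi_greater_1[OF assms(1)] AE_space
proof eventually_elim
  case (elim \<omega>)
  have "good_event xi0 coin \<alpha> t \<omega>"
    if "\<And>z. is_max_D xi0 coin t \<omega> z \<Longrightarrow> K \<le> z"
      and "\<And>y. n \<le> y \<Longrightarrow> coin y \<omega> \<or> \<omega> \<notin> near_max_event t y"
  proof (rule good_event_if_maximisers_far[where n = n])
    show "real n + \<alpha> \<le> real z" if "is_max_D xi0 coin t \<omega> z" for z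
      using that \<open>\<And>z. is_max_D xi0 coin t \<omega> z \<Longrightarrow> K \<le> z\<close> assms(2) by force
    show "coin y \<omega> \<or> \<not> near_max_off \<alpha> xi0 coin t y \<omega>" if "n \<le> y" for y
      using that \<open>\<And>y. n \<le> y \<Longrightarrow> coin y \<omega> \<or> \<omega> \<notin> near_max_event t y\<close> elim
      by (auto simp: near_max_event_def)
  qed (use elim in auto)
  then show ?case by (meson not_le)
qed

lemma eventually_prob_good_event_ge:
  assumes "0 < \<epsilon>"
  shows "\<forall>\<^sub>F t in at_top. 1 - \<epsilon> \<le> prob {\<omega> \<in> space M. good_event xi0 coin \<alpha> t \<omega>}"
proof -
  define \<delta> where "\<delta> = \<epsilon> / (2 * (2 * nat \<lceil>\<alpha>\<rceil> + 1))"
  have "0 < \<delta>" using assms by (simp add: \<delta>_def)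
  obtain n0 where n0: "\<And>y. n0 \<le> y \<Longrightarrow> 1 - \<delta> < p y"
    using order_tendstoD(1)[OF p_tendsto_1, of "1 - \<delta>"] \<open>0 < \<delta>\<close>
    by (auto simp: eventually_sequentially)
  define n where "n = max 1 n0"
  define K where "K = n + nat \<lceil>\<alpha>\<rceil> + 1"
  define Bad where "Bad t = (\<Union>y\<in>{n..}. {\<omega> \<in> space M. \<not> coin y \<omega>} \<inter> near_max_event t y)" for t
  define Far where "Far t = {\<omega> \<in> space M. \<exists>z. is_max_D xi0 coin t \<omega> z \<and> z < K}" for t
  have Bad_sets: "Bad t \<in> sets M" and Far_sets: "Far t \<in> sets M" for t
    unfolding Bad_def Far_def by measurable
  have Bad_le: "prob (Bad t) \<le> \<delta> * (2 * nat \<lceil>\<alpha>\<rceil> + 1)" for t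
    unfolding Bad_def using \<open>0 < \<delta>\<close> n0 by (intro prob_bad_sites_le) (force simp: n_def)+
  have "\<delta> * (2 * nat \<lceil>\<alpha>\<rceil> + 1) = \<epsilon> / 2"
    by (simp add: \<delta>_def field_simps)
  then have Bad: "prob (Bad t) \<le> \<epsilon> / 2" for t
    using Bad_le[of t] by linarith
  show ?thesis
    using eventually_prob_max_below_le[of "\<epsilon> / 2" K, OF half_gt_zero[OF assms]]
      eventually_gt_at_top[of 0]
  proof eventually_elim
    case (elim t)
    have "real n + \<alpha> \<le> real K" unfolding K_def by linarith
    then have "prob (space M - {\<omega> \<in> space M. good_event xi0 coin \<alpha> t \<omega>}) \<le> prob (Far t \<union> Bad t)"
      using AE_good_event[OF elim(2), of n K] Far_sets Bad_sets
      by (intro finite_measure_mono_AE) (auto simp: Far_def Bad_def elim!: eventually_mono)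
    also have "\<dots> \<le> \<epsilon>"
      using measure_Un_le[OF Far_sets[of t] Bad_sets[of t]] elim(1) Bad[of t]
      unfolding Far_def by linarith
    finally show ?case by (simp add: prob_compl)
  qed
qed

lemma tendsto_prob_good_event:
  "((\<lambda>t. prob {\<omega> \<in> space M. good_event xi0 coin \<alpha> t \<omega>}) \<longlongrightarrow> 1) at_top"
proof (rule tendstoI)
  fix \<epsilon> :: real assume "0 < \<epsilon>"
  then have "\<forall>\<^sub>F t in at_top. 1 - \<epsilon> / 2 \<le> prob {\<omega> \<in> space M. good_event xi0 coin \<alpha> t \<omega>}"
    by (intro eventually_prob_good_event_ge) simp
  then show "\<forall>\<^sub>F t in at_top. dist (prob {\<omega> \<in> space M. good_event xi0 coin \<alpha> t \<omega>}) 1 < \<epsilon>"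
  proof eventually_elim
    case (elim t)
    moreover have "prob {\<omega> \<in> space M. good_event xi0 coin \<alpha> t \<omega>} \<le> 1" by (rule prob_le_1)
    ultimately show ?case using \<open>0 < \<epsilon>\<close> unfolding dist_real_def abs_less_iff by linarith
  qed
qed

end

theorem lemma6p1:
  fixes M :: "'a measure" and \<alpha> :: real and p :: "nat \<Rightarrow> real"
    and xi0 :: "int \<Rightarrow> 'a \<Rightarrow> real" and coin :: "nat \<Rightarrow> 'a \<Rightarrow> bool"
  assumes "prob_space M"
    and "\<alpha> \<ge> 2"
    and "\<forall>n. 0 \<le> p n \<and> p n \<le> 1"
    and "\<exists>N. \<forall>m n. N \<le> m \<and> m \<le> n \<longrightarrow> p m \<le> p n"
    and "p \<longlonglongrightarrow> 1"
    and "prob_space.indep_vars M (\<lambda>_. borel)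
           (\<lambda>i. case i of Inl z \<Rightarrow> xi0 z | Inr n \<Rightarrow> (\<lambda>\<omega>. of_bool (coin n \<omega>)))
           (UNIV :: (int + nat) set)"
    and "\<forall>z. \<forall>x\<ge>1. measure M {\<omega> \<in> space M. xi0 z \<omega> > x} = x powr (- \<alpha>)"
    and "\<forall>n\<ge>1. measure M {\<omega> \<in> space M. coin n \<omega>} = p n"
  shows "((\<lambda>t. measure M {\<omega> \<in> space M. good_event xi0 coin \<alpha> t \<omega>}) \<longlongrightarrow> 1) at_top"
proof -
  interpret pareto_coupling M \<alpha> p xi0 coin
    unfolding pareto_coupling_def pareto_coupling_axioms_def using assms(1,2,5-8) by blast
  show ?thesis by (rule tendsto_prob_good_event)
qed

end
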